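(* For every integer $n\geq 1$, $$c_n(231,321 : 231)=c_n(312,321 : 312)=F_n,$$ where $F_n$ is the $n$-th Fibonacci number, indexed by $F_1=1$, $F_2=2$, $F_n=F_{n-1}+F_{n-2}$ for $n\ge 3$.
   Context: $S_n$ is the symmetric group on $[n]=\{1,\dots,n\}$, and a permutation $\pi\in S_n$ is written in one-line notation $\pi=\pi_1\pi_2\cdots\pi_n$ with $\pi_i=\pi(i)$. For $\tau\in S_k$, $k\le n$, $\pi$ contains $\tau$ if there are indices $i_1<\dots<i_k$ with $\pi_{i_s}>\pi_{i_t}$ iff $\tau_s>\tau_t$ for all $1\le s<t\le k$; otherwise $\pi$ avoids $\tau$. $\pi^2$ denotes the composition $\pi\circ\pi$. For patterns $\sigma_1,\sigma_2,\rho$, $c_n(\sigma_1,\sigma_2 : \rho)$ denotes the number of permutations $\pi\in S_n$ such that $\pi$ avoids both $\sigma_1$ and $\sigma_2$ and $\pi^2$ avoids $\rho$. *)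

theory Defs
  imports "HOL-Combinatorics.Permutations"
begin

text \<open>A pattern tau in S_k is given by its one-line notation as a list
  of length k (tau_s = tau ! (s-1), stored 0-indexed).\<close>

definition contains :: "(nat \<Rightarrow> nat) \<Rightarrow> nat \<Rightarrow> nat list \<Rightarrow> bool" where
  "contains p n tau \<longleftrightarrow>
     (\<exists>ix :: nat \<Rightarrow> nat.
        (\<forall>s < length tau. 1 \<le> ix s \<and> ix s \<le> n) \<and>
        (\<forall>s t. s < t \<and> t < length tau \<longrightarrow> ix s < ix t) \<and>
        (\<forall>s t. s < t \<and> t < length tau \<longrightarrow>
              (p (ix s) > p (ix t) \<longleftrightarrow> tau ! s > tau ! t)))"

definition avoids :: "(nat \<Rightarrow> nat) \<Rightarrow> nat \<Rightarrow> nat list \<Rightarrow> bool" where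
  "avoids p n tau \<longleftrightarrow> \<not> contains p n tau"

definition c_count :: "nat \<Rightarrow> nat list \<Rightarrow> nat list \<Rightarrow> nat list \<Rightarrow> nat" where
  "c_count n s1 s2 rho =
     card {p. p permutes {1..n} \<and> avoids p n s1 \<and> avoids p n s2 \<and> avoids (p \<circ> p) n rho}"

text \<open>Fibonacci shifted: F 1 = 1, F 2 = 2, F n = F (n-1) + F (n-2).\<close>
fun F :: "nat \<Rightarrow> nat" where
  "F 0 = 1"
| "F (Suc 0) = 1"
| "F (Suc (Suc n)) = F (Suc n) + F n"

end

theory Submission
  imports Defs
begin

text \<open>Avoiding both 231 and 321 means that no entry has two larger entries to its left; by
  counting, this forces \<open>\<pi>(z) \<ge> z - 1\<close>. Under that lower bound, whenever an entry at or
  before position \<open>m\<close> jumps above \<open>m\<close>, the entry at position \<open>m + 1\<close> must be \<open>m\<close>. So if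
  \<open>\<pi>(z) > z + 1\<close>, then \<open>\<pi>\<^sup>2\<close> takes the values \<open>\<pi>(z) - 1, \<pi>(z), z\<close> at \<open>z, z + 1, z + 2\<close>, an
  occurrence of 231. Hence the permutations counted are exactly those moving every point by at
  most one, i.e. the products of disjoint adjacent transpositions, and these satisfy the
  Fibonacci recursion according to whether \<open>n\<close> is fixed or swapped with \<open>n - 1\<close>. The second
  count equals the first by reverse-complement symmetry, which maps 231 to 312 and fixes 321.\<close>

lemma contains_length3:
  "contains p n [a, b, c] \<longleftrightarrow>
     (\<exists>i j k. 1 \<le> i \<and> i < j \<and> j < k \<and> k \<le> n \<and>
        (p j < p i \<longleftrightarrow> b < a) \<and> (p k < p i \<longleftrightarrow> c < a) \<and> (p k < p j \<longleftrightarrow> c < b))"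
    (is "_ \<longleftrightarrow> (\<exists>i j k. ?occ i j k)")
proof
  assume "contains p n [a, b, c]"
  then obtain ix where bounds: "\<forall>s < length [a, b, c]. 1 \<le> ix s \<and> ix s \<le> n"
    and incr: "\<forall>s t. s < t \<and> t < length [a, b, c] \<longrightarrow> ix s < ix t"
    and order: "\<forall>s t. s < t \<and> t < length [a, b, c] \<longrightarrow>
                  (p (ix s) > p (ix t) \<longleftrightarrow> [a, b, c] ! s > [a, b, c] ! t)"
    unfolding contains_def by blast
  have "?occ (ix 0) (ix 1) (ix 2)"
    using bounds[rule_format, of 0] bounds[rule_format, of 2] incr[rule_format, of 0 1]
      incr[rule_format, of 1 2] order[rule_format, of 0 1] order[rule_format, of 0 2]
      order[rule_format, of 1 2]
    by simp
  then show "\<exists>i j k. ?occ i j k" by blast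
next
  assume "\<exists>i j k. ?occ i j k"
  then obtain i j k where "?occ i j k" by blast
  then show "contains p n [a, b, c]"
    unfolding contains_def
    by (intro exI[of _ "nth [i, j, k]"]) (auto simp: less_Suc_eq nth_Cons')
qed

lemma contains_231_or_321_iff:
  "contains p n [2, 3, 1] \<or> contains p n [3, 2, 1] \<longleftrightarrow>
     (\<exists>i j k. 1 \<le> i \<and> i < j \<and> j < k \<and> k \<le> n \<and> p k < p i \<and> p k < p j)"
  unfolding contains_length3 by (auto simp: not_less) (meson linorder_not_le)

section \<open>Permutations moving each point by at most one\<close>

lemma unit_displacement_avoids:
  assumes "\<forall>z. p z \<le> Suc z \<and> z \<le> Suc (p z)" and "c < a"
  shows "avoids p n [a, b, c]"
proof -
  have "p i \<le> p k" if "i < j" "j < k" for i j k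
    using assms(1) that by (metis Suc_le_eq le_trans not_less_eq_eq)
  then show ?thesis
    using assms(2) unfolding avoids_def contains_length3 by (meson leD)
qed

lemma avoids_231_321_lower_bound:
  assumes p: "p permutes {1..n}" and "avoids p n [2, 3, 1]" and "avoids p n [3, 2, 1]"
  shows "z \<le> Suc (p z)"
proof (cases "z \<in> {1..n}")
  case False
  then show ?thesis using permutes_not_in[OF p] by simp
next
  case True
  then have "1 \<le> p z" using permutes_in_image[OF p] by auto
  define above where "above = {i \<in> {1..z - 1}. p z < p i}"
  define below where "below = {i \<in> {1..z - 1}. p i < p z}"
  have "p i \<noteq> p z" if "i \<in> {1..z - 1}" for i
  proof -
    have "i \<noteq> z" using that by auto
    then show ?thesis using permutes_inj[OF p] by (simp add: inj_eq)
  qed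
  then have "{1..z - 1} \<subseteq> above \<union> below"
    unfolding above_def below_def using linorder_neq_iff by blast
  moreover have "finite above" "finite below"
    unfolding above_def below_def by simp_all
  ultimately have "z - 1 \<le> card above + card below"
    using card_mono[of "above \<union> below" "{1..z - 1}"] card_Un_le[of above below] by simp
  moreover have "card above \<le> 1"
  proof -
    have "\<not> (\<exists>i j k. 1 \<le> i \<and> i < j \<and> j < k \<and> k \<le> n \<and> p k < p i \<and> p k < p j)"
      using assms(2,3) contains_231_or_321_iff unfolding avoids_def by blast
    then have "\<not> (i \<in> above \<and> j \<in> above \<and> i < j)" for i j
      using True unfolding above_def by auto
    then have "\<forall>i \<in> above. \<forall>j \<in> above. i = j"
      by (meson linorder_neqE_nat)
    then show ?thesis
      using card_le_Suc0_iff_eq[OF \<open>finite above\<close>] by simp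
  qed
  moreover have "card below \<le> p z - 1"
  proof -
    have "p ` below \<subseteq> {1..p z - 1}"
      using permutes_in_image[OF p] True unfolding below_def by fastforce
    then have "card (p ` below) \<le> p z - 1"
      using card_mono[of "{1..p z - 1}"] by fastforce
    then show ?thesis
      using permutes_inj[OF p] by (simp add: card_image inj_on_subset)
  qed
  ultimately show ?thesis using \<open>1 \<le> p z\<close> by linarith
qed

lemma descent_after_jump:
  assumes p: "p permutes {1..n}" and lower: "\<forall>z. z \<le> Suc (p z)"
    and "x \<le> m" and "m < p x"
  shows "p (Suc m) = m"
proof -
  have "p 0 = 0" using permutes_not_in[OF p] by simp
  then have "1 \<le> x" using \<open>m < p x\<close> by (cases x) auto
  have "card (p -` {1..m}) = m"
    using card_vimage_inj[OF permutes_inj[OF p]] permutes_surj[OF p] by simp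
  moreover have "p -` {1..m} \<subseteq> {1..Suc m} - {x}"
  proof
    fix z assume "z \<in> p -` {1..m}"
    then have "1 \<le> p z" "p z \<le> m" by auto
    moreover have "z \<le> Suc (p z)" using lower by simp
    moreover have "z \<noteq> 0" using \<open>p 0 = 0\<close> \<open>1 \<le> p z\<close> by (cases "z = 0") auto
    ultimately show "z \<in> {1..Suc m} - {x}" using \<open>m < p x\<close> by auto
  qed
  moreover have "card ({1..Suc m} - {x}) = m" using \<open>1 \<le> x\<close> \<open>x \<le> m\<close> by simp
  ultimately have "p -` {1..m} = {1..Suc m} - {x}" by (intro card_subset_eq) auto
  then have "Suc m \<in> p -` {1..m}" using \<open>x \<le> m\<close> by auto
  then have "p (Suc m) \<le> m" by simp
  then show ?thesis using lower[rule_format, of "Suc m"] by simp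
qed

lemma avoids_231_square_upper_bound:
  assumes p: "p permutes {1..n}" and lower: "\<forall>z. z \<le> Suc (p z)"
    and avoid: "avoids (p \<circ> p) n [2, 3, 1]"
  shows "p z \<le> Suc z"
proof (rule ccontr)
  assume "\<not> p z \<le> Suc z"
  then have jump: "Suc z < p z" by simp
  have p1: "p (Suc z) = z" and p2: "p (Suc (Suc z)) = Suc z"
    using descent_after_jump[OF p lower, of z] jump by auto
  have p3: "p (p z) = p z - 1"
    using descent_after_jump[OF p lower, of z "p z - 1"] jump by simp
  have "1 \<le> z" using jump permutes_not_in[OF p, of 0] by (cases z) auto
  have "Suc (Suc z) \<in> {1..n}" using p2 permutes_not_in[OF p] by fastforce
  then have "contains (p \<circ> p) n [2, 3, 1]"
    unfolding contains_length3 using \<open>1 \<le> z\<close> p1 p2 p3 jump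
    by (intro exI[of _ z] exI[of _ "Suc z"] exI[of _ "Suc (Suc z)"]) auto
  with avoid show False by (simp add: avoids_def)
qed

lemma unit_displacement_involution:
  assumes p: "p permutes {1..n}" and disp: "\<forall>z. p z \<le> Suc z \<and> z \<le> Suc (p z)"
  shows "p (p z) = z"
proof -
  have "p z = z \<or> p z = Suc z \<or> Suc (p z) = z" using disp[rule_format, of z] by linarith
  moreover have "p (p z) = z" if "p z = Suc z"
    using descent_after_jump[OF p _ order.refl, of z] disp that by simp
  moreover have "p (p z) = z" if "Suc (p z) = z"
  proof -
    \<comment> \<open>An upper bound for p is a lower bound for its inverse.\<close>
    have "y \<le> Suc (inv p y)" for y
      using disp[rule_format, of "inv p y"] by (simp add: permutes_inverses[OF p])
    then have "inv p (Suc (p z)) = p z"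
      using descent_after_jump[OF permutes_inv[OF p], of "p z" "p z"] that
      by (simp add: permutes_inverses[OF p])
    then show ?thesis using that by (simp add: permutes_inv_eq[OF p])
  qed
  ultimately show ?thesis by auto
qed

definition unit_displacement_perms :: "nat \<Rightarrow> (nat \<Rightarrow> nat) set" where
  "unit_displacement_perms n = {p. p permutes {1..n} \<and> (\<forall>z. p z \<le> Suc z \<and> z \<le> Suc (p z))}"

lemma avoiders_231_321_square_231_eq:
  "{p. p permutes {1..n} \<and> avoids p n [2, 3, 1] \<and> avoids p n [3, 2, 1] \<and> avoids (p \<circ> p) n [2, 3, 1]}
     = unit_displacement_perms n"
proof (intro equalityI subsetI)
  fix p assume "p \<in> {p. p permutes {1..n} \<and> avoids p n [2, 3, 1] \<and> avoids p n [3, 2, 1]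
                      \<and> avoids (p \<circ> p) n [2, 3, 1]}"
  then have p: "p permutes {1..n}" and "avoids p n [2, 3, 1]" "avoids p n [3, 2, 1]"
    and "avoids (p \<circ> p) n [2, 3, 1]" by auto
  then have "\<forall>z. z \<le> Suc (p z)" using avoids_231_321_lower_bound by blast
  with p show "p \<in> unit_displacement_perms n"
    using avoids_231_square_upper_bound[OF p] \<open>avoids (p \<circ> p) n [2, 3, 1]\<close>
    unfolding unit_displacement_perms_def by blast
next
  fix p assume "p \<in> unit_displacement_perms n"
  then have p: "p permutes {1..n}" and disp: "\<forall>z. p z \<le> Suc z \<and> z \<le> Suc (p z)"
    unfolding unit_displacement_perms_def by auto
  have "p \<circ> p = id" using unit_displacement_involution[OF p disp] by auto
  then show "p \<in> {p. p permutes {1..n} \<and> avoids p n [2, 3, 1] \<and> avoids p n [3, 2, 1]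
                      \<and> avoids (p \<circ> p) n [2, 3, 1]}"
    using p unit_displacement_avoids[OF disp] unit_displacement_avoids[of id] by simp
qed

section \<open>The Fibonacci recursion\<close>

lemma permutes_atLeastAtMost_le_iff:
  assumes "p permutes {1..n}"
  shows "p z \<le> n \<longleftrightarrow> z \<le> n"
proof (cases "z \<in> {1..n}")
  case True
  then show ?thesis using permutes_in_image[OF assms, of z] by simp
next
  case False
  then show ?thesis using permutes_not_in[OF assms False] by simp
qed

lemma permutes_atLeastAtMost_Suc_fixed:
  assumes "p permutes {1..Suc n}" and "p (Suc n) = Suc n"
  shows "p permutes {1..n}"
  using assms unfolding permutes_def by (metis atLeastAtMost_iff le_Suc_eq)

lemma unit_displacement_perms_mono: "unit_displacement_perms n \<subseteq> unit_displacement_perms (Suc n)"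
  unfolding unit_displacement_perms_def using permutes_subset[of _ "{1..n}" "{1..Suc n}"] by auto

lemma unit_displacement_perms_Suc_fixed:
  "p \<in> unit_displacement_perms (Suc n) \<Longrightarrow> p (Suc n) = Suc n \<Longrightarrow> p \<in> unit_displacement_perms n"
  unfolding unit_displacement_perms_def using permutes_atLeastAtMost_Suc_fixed by blast

lemma transpose_comp_unit_displacement_perms:
  assumes "q \<in> unit_displacement_perms n"
  shows "transpose (Suc n) (Suc (Suc n)) \<circ> q \<in> unit_displacement_perms (Suc (Suc n))"
proof -
  have q: "q permutes {1..n}" and disp: "\<forall>z. q z \<le> Suc z \<and> z \<le> Suc (q z)"
    using assms unfolding unit_displacement_perms_def by auto
  have "transpose (Suc n) (Suc (Suc n)) \<circ> q permutes {1..Suc (Suc n)}"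
    using permutes_compose[OF permutes_subset[OF q] permutes_swap_id] by simp
  moreover have "(transpose (Suc n) (Suc (Suc n)) \<circ> q) z =
      (if z \<le> n then q z else transpose (Suc n) (Suc (Suc n)) z)" for z
    using permutes_atLeastAtMost_le_iff[OF q, of z] permutes_not_in[OF q, of z] by auto
  ultimately show ?thesis
    using disp unfolding unit_displacement_perms_def by (auto simp: transpose_def)
qed

lemma transpose_comp_unit_displacement_perms_inverse:
  assumes p: "p \<in> unit_displacement_perms (Suc (Suc n))" and "p (Suc (Suc n)) = Suc n"
  shows "transpose (Suc n) (Suc (Suc n)) \<circ> p \<in> unit_displacement_perms n"
proof -
  let ?t = "transpose (Suc n) (Suc (Suc n))"
  have perm: "p permutes {1..Suc (Suc n)}" and disp: "\<forall>z. p z \<le> Suc z \<and> z \<le> Suc (p z)"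
    using p unfolding unit_displacement_perms_def by auto
  have inv: "p (p z) = z" for z using unit_displacement_involution[OF perm disp] .
  have tp: "(?t \<circ> p) z = (if z \<in> {Suc n, Suc (Suc n)} then z else p z)" for z
    using inv[of z] inv[of "Suc n"] inv[of "Suc (Suc n)"] assms(2) by (auto simp: transpose_def)
  have "?t \<circ> p \<in> unit_displacement_perms (Suc (Suc n))" (is "?tp \<in> _")
    using permutes_compose[OF perm permutes_swap_id, of "Suc n" "Suc (Suc n)"] tp disp
    unfolding unit_displacement_perms_def by auto
  then have "?tp \<in> unit_displacement_perms (Suc n)"
    by (rule unit_displacement_perms_Suc_fixed) (simp only: tp, simp)
  then show ?thesis
    by (rule unit_displacement_perms_Suc_fixed) (simp only: tp, simp)
qed

lemma unit_displacement_perms_Suc_Suc: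
  "unit_displacement_perms (Suc (Suc n)) =
     unit_displacement_perms (Suc n) \<union>
     (\<circ>) (transpose (Suc n) (Suc (Suc n))) ` unit_displacement_perms n"
  (is "_ = ?R")
proof (intro equalityI subsetI)
  fix p assume p: "p \<in> unit_displacement_perms (Suc (Suc n))"
  then have "p (Suc (Suc n)) \<le> Suc (Suc n)" "Suc n \<le> p (Suc (Suc n))"
    using permutes_atLeastAtMost_le_iff[of p "Suc (Suc n)" "Suc (Suc n)"]
    unfolding unit_displacement_perms_def by auto
  then consider "p (Suc (Suc n)) = Suc (Suc n)" | "p (Suc (Suc n)) = Suc n" by linarith
  then show "p \<in> ?R"
  proof cases
    case 1
    then show ?thesis using unit_displacement_perms_Suc_fixed[OF p] by simp
  next
    case 2
    then have "p = transpose (Suc n) (Suc (Suc n)) \<circ> (transpose (Suc n) (Suc (Suc n)) \<circ> p)"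
      by (simp add: comp_assoc[symmetric])
    then show ?thesis using transpose_comp_unit_displacement_perms_inverse[OF p 2] by blast
  qed
next
  fix p assume "p \<in> ?R"
  then show "p \<in> unit_displacement_perms (Suc (Suc n))"
    using unit_displacement_perms_mono transpose_comp_unit_displacement_perms by blast
qed

lemma finite_unit_displacement_perms: "finite (unit_displacement_perms n)"
  by (rule finite_subset[OF _ finite_permutations[of "{1..n}"]])
    (auto simp: unit_displacement_perms_def)

lemma card_unit_displacement_perms: "card (unit_displacement_perms n) = F n"
proof (induction n rule: F.induct)
  case 1
  have "unit_displacement_perms 0 = {id}" by (auto simp: unit_displacement_perms_def)
  then show ?case by simp
next
  case 2
  have "unit_displacement_perms (Suc 0) = {id}" by (auto simp: unit_displacement_perms_def)
  then show ?case by simp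
next
  case (3 n)
  let ?t = "transpose (Suc n) (Suc (Suc n))"
  have "inj_on ((\<circ>) ?t) (unit_displacement_perms n)"
    by (rule inj_on_inverseI[of _ "(\<circ>) ?t"]) (simp add: comp_assoc[symmetric])
  moreover have "unit_displacement_perms (Suc n) \<inter> (\<circ>) ?t ` unit_displacement_perms n = {}"
  proof -
    have "p (Suc (Suc n)) = Suc (Suc n)" if "p \<in> unit_displacement_perms (Suc n)" for p
      using that permutes_not_in[of p "{1..Suc n}" "Suc (Suc n)"]
      by (simp add: unit_displacement_perms_def)
    moreover have "(?t \<circ> q) (Suc (Suc n)) = Suc n" if "q \<in> unit_displacement_perms n" for q
      using that permutes_not_in[of q "{1..n}" "Suc (Suc n)"]
      by (simp add: unit_displacement_perms_def)
    ultimately show ?thesis by fastforce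
  qed
  ultimately have "card (unit_displacement_perms (Suc (Suc n))) = F (Suc n) + F n"
    using 3 finite_unit_displacement_perms
    by (simp add: unit_displacement_perms_Suc_Suc card_Un_disjoint card_image)
  then show ?case by simp
qed

section \<open>Reverse-complement symmetry\<close>

definition reflect :: "nat \<Rightarrow> nat \<Rightarrow> nat" where
  "reflect n i = (if i \<in> {1..n} then Suc n - i else i)"

definition reverse_complement :: "nat \<Rightarrow> (nat \<Rightarrow> nat) \<Rightarrow> nat \<Rightarrow> nat" where
  "reverse_complement n p = reflect n \<circ> p \<circ> reflect n"

definition reverse_complement_pattern :: "nat \<Rightarrow> nat list \<Rightarrow> nat list" where
  "reverse_complement_pattern c tau = map (\<lambda>v. c - v) (rev tau)"

lemma reflect_reflect [simp]: "reflect n (reflect n i) = i"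
  by (auto simp: reflect_def)

lemma reflect_permutes: "reflect n permutes {1..n}"
proof (rule bij_imp_permutes)
  show "bij_betw (reflect n) {1..n} {1..n}"
    by (rule bij_betw_byWitness[of _ "reflect n"]) (auto simp: reflect_def)
qed (auto simp: reflect_def)

lemma reverse_complement_permutes:
  "p permutes {1..n} \<Longrightarrow> reverse_complement n p permutes {1..n}"
  unfolding reverse_complement_def
  by (intro permutes_compose reflect_permutes)

lemma reverse_complement_reverse_complement [simp]:
  "reverse_complement n (reverse_complement n p) = p"
  by (simp add: reverse_complement_def fun_eq_iff)

lemma reverse_complement_comp:
  "reverse_complement n (p \<circ> q) = reverse_complement n p \<circ> reverse_complement n q"
  by (simp add: reverse_complement_def fun_eq_iff)

lemma reverse_complement_apply:
  assumes "p permutes {1..n}" and "y \<in> {1..n}"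
  shows "reverse_complement n p (Suc n - y) = Suc n - p y"
proof -
  have "reflect n (Suc n - y) = y" using assms(2) by (auto simp: reflect_def)
  moreover have "reflect n (p y) = Suc n - p y"
    using assms(2) permutes_in_image[OF assms(1), of y] by (simp add: reflect_def)
  ultimately show ?thesis by (simp add: reverse_complement_def)
qed

lemma reverse_complement_pattern_involution:
  "\<forall>v \<in> set tau. v \<le> c \<Longrightarrow> reverse_complement_pattern c (reverse_complement_pattern c tau) = tau"
  by (simp add: reverse_complement_pattern_def rev_map map_idI)

lemma contains_imp_contains_reverse_complement:
  assumes p: "p permutes {1..n}" and "contains p n tau" and bounded: "\<forall>v \<in> set tau. v \<le> c"
  shows "contains (reverse_complement n p) n (reverse_complement_pattern c tau)"
proof -
  define L where "L = length tau"
  obtain ix where bounds: "\<forall>s < L. 1 \<le> ix s \<and> ix s \<le> n"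
    and incr: "\<forall>s t. s < t \<and> t < L \<longrightarrow> ix s < ix t"
    and order: "\<forall>s t. s < t \<and> t < L \<longrightarrow> (p (ix s) > p (ix t) \<longleftrightarrow> tau ! s > tau ! t)"
    using assms(2) unfolding contains_def L_def by blast
  define ix' where "ix' s = Suc n - ix (L - Suc s)" for s
  have image: "reverse_complement n p (ix' s) = Suc n - p (ix (L - Suc s))"
    and in_range: "p (ix (L - Suc s)) \<in> {1..n}" if "s < L" for s
    using bounds[rule_format, of "L - Suc s"] that reverse_complement_apply[OF p]
      permutes_in_image[OF p] by (simp_all add: ix'_def)
  have pattern: "reverse_complement_pattern c tau ! s = c - tau ! (L - Suc s)"
    and pattern_bounded: "tau ! (L - Suc s) \<le> c" if "s < L" for s
    using that bounded nth_mem[of "L - Suc s" tau]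
    by (simp_all add: reverse_complement_pattern_def rev_nth L_def)
  have "1 \<le> ix' s \<and> ix' s \<le> n" if "s < L" for s
    using bounds[rule_format, of "L - Suc s"] that by (auto simp: ix'_def)
  moreover have "ix' s < ix' t" if "s < t" "t < L" for s t
  proof -
    have "L - Suc t < L - Suc s" "L - Suc s < L" using that by auto
    then have "ix (L - Suc t) < ix (L - Suc s)" using incr by blast
    then show ?thesis using bounds[rule_format, of "L - Suc s"] that by (simp add: ix'_def)
  qed
  moreover have "reverse_complement n p (ix' s) > reverse_complement n p (ix' t) \<longleftrightarrow>
      reverse_complement_pattern c tau ! s > reverse_complement_pattern c tau ! t"
    if "s < t" "t < L" for s t
  proof -
    have "L - Suc t < L - Suc s" "L - Suc s < L" using that by auto
    then have "p (ix (L - Suc t)) > p (ix (L - Suc s)) \<longleftrightarrow> tau ! (L - Suc t) > tau ! (L - Suc s)"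
      using order by blast
    moreover have "Suc n - p (ix (L - Suc s)) > Suc n - p (ix (L - Suc t)) \<longleftrightarrow>
        p (ix (L - Suc t)) > p (ix (L - Suc s))"
      using in_range[of s] in_range[of t] that by (simp only: atLeastAtMost_iff) arith
    moreover have "c - tau ! (L - Suc s) > c - tau ! (L - Suc t) \<longleftrightarrow>
        tau ! (L - Suc t) > tau ! (L - Suc s)"
      using pattern_bounded[of s] pattern_bounded[of t] that by arith
    ultimately show ?thesis using that image pattern by simp
  qed
  ultimately show ?thesis
    unfolding contains_def by (intro exI[of _ ix']) (simp add: reverse_complement_pattern_def L_def)
qed

lemma avoids_reverse_complement_iff:
  assumes p: "p permutes {1..n}" and bounded: "\<forall>v \<in> set tau. v \<le> c"
  shows "avoids (reverse_complement n p) n (reverse_complement_pattern c tau) \<longleftrightarrow>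
           avoids p n tau"
proof -
  have bounded': "\<forall>v \<in> set (reverse_complement_pattern c tau). v \<le> c"
    by (simp add: reverse_complement_pattern_def)
  have "contains p n tau"
    if "contains (reverse_complement n p) n (reverse_complement_pattern c tau)"
    using contains_imp_contains_reverse_complement[OF reverse_complement_permutes[OF p] that bounded']
    by (simp add: reverse_complement_pattern_involution[OF bounded])
  then show ?thesis
    using contains_imp_contains_reverse_complement[OF p _ bounded] unfolding avoids_def by blast
qed

lemma c_count_reverse_complement:
  assumes "\<forall>v \<in> set \<sigma>\<^sub>1 \<union> set \<sigma>\<^sub>2 \<union> set \<rho>. v \<le> c"
  shows "c_count n (reverse_complement_pattern c \<sigma>\<^sub>1) (reverse_complement_pattern c \<sigma>\<^sub>2)
           (reverse_complement_pattern c \<rho>) = c_count n \<sigma>\<^sub>1 \<sigma>\<^sub>2 \<rho>"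
proof -
  define S where "S \<sigma>\<^sub>1 \<sigma>\<^sub>2 \<rho> =
    {p. p permutes {1..n} \<and> avoids p n \<sigma>\<^sub>1 \<and> avoids p n \<sigma>\<^sub>2 \<and> avoids (p \<circ> p) n \<rho>}"
    for \<sigma>\<^sub>1 \<sigma>\<^sub>2 \<rho>
  let ?S' = "S (reverse_complement_pattern c \<sigma>\<^sub>1) (reverse_complement_pattern c \<sigma>\<^sub>2)
               (reverse_complement_pattern c \<rho>)"
  have mem: "reverse_complement n p \<in> ?S' \<longleftrightarrow> p \<in> S \<sigma>\<^sub>1 \<sigma>\<^sub>2 \<rho>" if p: "p permutes {1..n}" for p
    using assms p reverse_complement_permutes[OF p] permutes_compose[OF p p]
    by (simp add: S_def avoids_reverse_complement_iff reverse_complement_comp[symmetric])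
  have "?S' = reverse_complement n ` S \<sigma>\<^sub>1 \<sigma>\<^sub>2 \<rho>"
  proof (intro equalityI subsetI)
    fix q assume q: "q \<in> ?S'"
    then have "q permutes {1..n}" by (simp add: S_def)
    then have "reverse_complement n q \<in> S \<sigma>\<^sub>1 \<sigma>\<^sub>2 \<rho>"
      using mem[OF reverse_complement_permutes] q by simp
    then show "q \<in> reverse_complement n ` S \<sigma>\<^sub>1 \<sigma>\<^sub>2 \<rho>"
      using reverse_complement_reverse_complement image_eqI by metis
  qed (use mem in \<open>auto simp: S_def\<close>)
  moreover have "inj_on (reverse_complement n) (S \<sigma>\<^sub>1 \<sigma>\<^sub>2 \<rho>)"
    by (rule inj_on_inverseI[of _ "reverse_complement n"]) simp
  ultimately show ?thesis
    unfolding c_count_def S_def[symmetric] by (simp add: card_image)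
qed

theorem theorem3p2:
  fixes n :: nat
  assumes "n \<ge> 1"
  shows "c_count n [2,3,1] [3,2,1] [2,3,1] = F n
       \<and> c_count n [3,1,2] [3,2,1] [3,1,2] = F n"
proof -
  have "c_count n [2,3,1] [3,2,1] [2,3,1] = F n"
    unfolding c_count_def avoiders_231_321_square_231_eq by (rule card_unit_displacement_perms)
  moreover have "c_count n [3,1,2] [3,2,1] [3,1,2] = c_count n [2,3,1] [3,2,1] [2,3,1]"
    using c_count_reverse_complement[of "[2,3,1]" "[3,2,1]" "[2,3,1]" 4 n]
    by (simp add: reverse_complement_pattern_def)
  ultimately show ?thesis by simp
qed

end
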